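(* Let $H$ be a Hopf algebra over a field $k$. For all $x,y\in H$, the elements $p_x=t_{x_1}t_{S(x_2)}$ and $q_{x,y}=t_{x_1}t_{y_1}t_{S(x_2y_2)}$ of $S(t_H)$, identified with $p_x\otimes1$ and $q_{x,y}\otimes1$ in $S(t_H)\otimes H$, belong to $\bar\mu(\mathcal{V}_H)$.
   Context: Sweedler notation $\Delta(x)=x_1\otimes x_2$; $S$ is the antipode of $H$. Let $t_H=\{t_x:x\in H\}$ be a copy of the vector space $H$ ($x\mapsto t_x$ linear) and $S(t_H)$ its symmetric algebra. Let $X_H=\{X_x:x\in H\}$ be another copy of $H$ and $T(X_H)$ the tensor algebra, a right $H$-comodule algebra via $\delta_T(X_x)=X_{x_1}\otimes x_2$. Give $S(t_H)\otimes H$ the right $H$-comodule algebra structure $\mathrm{id}\otimes\Delta$. Let $\mu:T(X_H)\to S(t_H)\otimes H$ be the algebra map with $\mu(X_x)=t_{x_1}\otimes x_2$ (an $H$-comodule algebra map), $I_H=\ker\mu$, $\mathcal{U}_H=T(X_H)/I_H$ (the universal $H$-comodule algebra), $\bar\mu:\mathcal{U}_H\hookrightarrow S(t_H)\otimes H$ the induced injection, and $\mathcal{V}_H=\{u\in\mathcal{U}_H:\delta(u)=u\otimes1\}$ its subalgebra of right $H$-coinvariants. *)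

theory Defs
  imports "HOL-Library.Poly_Mapping"
begin

text \<open>All vector spaces over the field 'k are represented concretely by
  finitely supported coefficient functions on a basis: a vector with basis indexed by
  type 'a is an element of  ('a =>0 'k).  Tensor products of such spaces are
  represented on the product basis  'a \<times> 'c.  The Hopf algebra H is given by a basis
  indexed by the type 'b (every vector space has a basis) and its structure maps on
  basis vectors.\<close>

definition smult :: "'k::field \<Rightarrow> ('a \<Rightarrow>\<^sub>0 'k) \<Rightarrow> ('a \<Rightarrow>\<^sub>0 'k)" where
  "smult r v = Poly_Mapping.map (\<lambda>c. r * c) v"

definition lin :: "('a \<Rightarrow> ('c \<Rightarrow>\<^sub>0 'k::field)) \<Rightarrow> ('a \<Rightarrow>\<^sub>0 'k) \<Rightarrow> ('c \<Rightarrow>\<^sub>0 'k)" where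
  "lin f v = (\<Sum>a\<in>Poly_Mapping.keys v. smult (Poly_Mapping.lookup v a) (f a))"

definition bas :: "'a \<Rightarrow> ('a \<Rightarrow>\<^sub>0 'k::field)" where
  "bas a = Poly_Mapping.single a 1"

definition tens :: "('a \<Rightarrow>\<^sub>0 'k::field) \<Rightarrow> ('c \<Rightarrow>\<^sub>0 'k) \<Rightarrow> ('a \<times> 'c \<Rightarrow>\<^sub>0 'k)" where
  "tens v w = lin (\<lambda>a. lin (\<lambda>c. bas (a, c)) w) v"

definition tmap :: "('a \<Rightarrow> ('c \<Rightarrow>\<^sub>0 'k::field)) \<Rightarrow> ('d \<Rightarrow> ('e \<Rightarrow>\<^sub>0 'k))
    \<Rightarrow> ('a \<times> 'd \<Rightarrow>\<^sub>0 'k) \<Rightarrow> ('c \<times> 'e \<Rightarrow>\<^sub>0 'k)" where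
  "tmap f g = lin (\<lambda>(a, d). tens (f a) (g d))"

definition bmul :: "('a \<Rightarrow> 'a \<Rightarrow> ('a \<Rightarrow>\<^sub>0 'k::field)) \<Rightarrow> ('a \<Rightarrow>\<^sub>0 'k) \<Rightarrow> ('a \<Rightarrow>\<^sub>0 'k) \<Rightarrow> ('a \<Rightarrow>\<^sub>0 'k)" where
  "bmul m v w = lin (\<lambda>a. lin (\<lambda>c. m a c) w) v"

definition tmul :: "('a \<Rightarrow> 'a \<Rightarrow> ('a \<Rightarrow>\<^sub>0 'k::field)) \<Rightarrow> ('c \<Rightarrow> 'c \<Rightarrow> ('c \<Rightarrow>\<^sub>0 'k))
    \<Rightarrow> ('a \<times> 'c) \<Rightarrow> ('a \<times> 'c) \<Rightarrow> ('a \<times> 'c \<Rightarrow>\<^sub>0 'k)" where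
  "tmul mA mB = (\<lambda>(a, b) (c, d). tens (mA a c) (mB b d))"

definition eps :: "('b \<Rightarrow> 'k::field) \<Rightarrow> ('b \<Rightarrow>\<^sub>0 'k) \<Rightarrow> 'k" where
  "eps cu x = (\<Sum>a\<in>Poly_Mapping.keys x. Poly_Mapping.lookup x a * cu a)"

definition hopf_algebra ::
  "('b \<Rightarrow> 'b \<Rightarrow> ('b \<Rightarrow>\<^sub>0 'k::field)) \<Rightarrow> ('b \<Rightarrow>\<^sub>0 'k) \<Rightarrow> ('b \<Rightarrow> ('b \<times> 'b \<Rightarrow>\<^sub>0 'k))
    \<Rightarrow> ('b \<Rightarrow> 'k) \<Rightarrow> ('b \<Rightarrow> ('b \<Rightarrow>\<^sub>0 'k)) \<Rightarrow> bool" where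
  "hopf_algebra mul one cmul cu ant \<longleftrightarrow>
     (\<forall>x y z. bmul mul (bmul mul x y) z = bmul mul x (bmul mul y z)) \<and>
     (\<forall>x. bmul mul one x = x \<and> bmul mul x one = x) \<and>
     (\<forall>x. lin (\<lambda>((a, b), c). bas (a, b, c)) (tmap cmul bas (lin cmul x))
            = tmap bas cmul (lin cmul x)) \<and>
     (\<forall>x. lin (\<lambda>(a, b). smult (cu a) (bas b)) (lin cmul x) = x \<and>
          lin (\<lambda>(a, b). smult (cu b) (bas a)) (lin cmul x) = x) \<and>
     (\<forall>x y. lin cmul (bmul mul x y) = bmul (tmul mul mul) (lin cmul x) (lin cmul y)) \<and>
     lin cmul one = tens one one \<and>
     (\<forall>x y. eps cu (bmul mul x y) = eps cu x * eps cu y) \<and>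
     eps cu one = 1 \<and>
     (\<forall>x. lin (\<lambda>(a, b). bmul mul (ant a) (bas b)) (lin cmul x) = smult (eps cu x) one \<and>
          lin (\<lambda>(a, b). bmul mul (bas a) (ant b)) (lin cmul x) = smult (eps cu x) one)"

subsection \<open>The symmetric algebra S(t_H) = k[t_b : b basis], and S(t_H) \<otimes> H\<close>

text \<open>Polynomials: poly_mappings from monomials ('b =>0 nat) to 'k, a commutative ring via Poly_Mapping.\<close>
definition tvar :: "'b \<Rightarrow> (('b \<Rightarrow>\<^sub>0 nat) \<Rightarrow>\<^sub>0 'k::field)" where
  "tvar b = Poly_Mapping.single (Poly_Mapping.single b 1) 1"

definition tH :: "('b \<Rightarrow>\<^sub>0 'k::field) \<Rightarrow> (('b \<Rightarrow>\<^sub>0 nat) \<Rightarrow>\<^sub>0 'k)" where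
  "tH x = lin tvar x"

definition SH_mul :: "('b \<Rightarrow> 'b \<Rightarrow> ('b \<Rightarrow>\<^sub>0 'k::field))
   \<Rightarrow> (('b \<Rightarrow>\<^sub>0 nat) \<times> 'b \<Rightarrow>\<^sub>0 'k) \<Rightarrow> (('b \<Rightarrow>\<^sub>0 nat) \<times> 'b \<Rightarrow>\<^sub>0 'k) \<Rightarrow> (('b \<Rightarrow>\<^sub>0 nat) \<times> 'b \<Rightarrow>\<^sub>0 'k)" where
  "SH_mul mul = bmul (tmul (\<lambda>m m'. bas (m + m')) mul)"

definition SH_one :: "('b \<Rightarrow>\<^sub>0 'k::field) \<Rightarrow> (('b \<Rightarrow>\<^sub>0 nat) \<times> 'b \<Rightarrow>\<^sub>0 'k)" where
  "SH_one one = tens 1 one"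

subsection \<open>Tensor algebra T(X_H): basis = words in the basis of H, X_b = [b]\<close>

definition TH_mul :: "('b list \<Rightarrow>\<^sub>0 'k::field) \<Rightarrow> ('b list \<Rightarrow>\<^sub>0 'k) \<Rightarrow> ('b list \<Rightarrow>\<^sub>0 'k)" where
  "TH_mul = bmul (\<lambda>v w. bas (v @ w))"

definition XH :: "('b \<Rightarrow>\<^sub>0 'k::field) \<Rightarrow> ('b list \<Rightarrow>\<^sub>0 'k)" where
  "XH x = lin (\<lambda>b. bas [b]) x"

text \<open>mu: the algebra map T(X_H) \<rightarrow> S(t_H) \<otimes> H with mu(X_b) = t_{b_1} \<otimes> b_2,
  i.e. mu(X_{b1} ... X_{bn}) = mu(X_{b1}) ... mu(X_{bn}).\<close>
definition mu_gen :: "('b \<Rightarrow> ('b \<times> 'b \<Rightarrow>\<^sub>0 'k::field)) \<Rightarrow> 'b \<Rightarrow> (('b \<Rightarrow>\<^sub>0 nat) \<times> 'b \<Rightarrow>\<^sub>0 'k)" where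
  "mu_gen cmul b = lin (\<lambda>(i, j). tens (tvar i) (bas j)) (cmul b)"

definition mu :: "('b \<Rightarrow> 'b \<Rightarrow> ('b \<Rightarrow>\<^sub>0 'k::field)) \<Rightarrow> ('b \<Rightarrow>\<^sub>0 'k) \<Rightarrow> ('b \<Rightarrow> ('b \<times> 'b \<Rightarrow>\<^sub>0 'k))
   \<Rightarrow> ('b list \<Rightarrow>\<^sub>0 'k) \<Rightarrow> (('b \<Rightarrow>\<^sub>0 nat) \<times> 'b \<Rightarrow>\<^sub>0 'k)" where
  "mu mul one cmul = lin (\<lambda>w. foldr (\<lambda>b acc. SH_mul mul (mu_gen cmul b) acc) w (SH_one one))"

text \<open>The coaction delta_T : T(X_H) \<rightarrow> T(X_H) \<otimes> H, the algebra map with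
  delta_T(X_b) = X_{b_1} \<otimes> b_2.\<close>
definition deltaT_gen :: "('b \<Rightarrow> ('b \<times> 'b \<Rightarrow>\<^sub>0 'k::field)) \<Rightarrow> 'b \<Rightarrow> ('b list \<times> 'b \<Rightarrow>\<^sub>0 'k)" where
  "deltaT_gen cmul b = lin (\<lambda>(i, j). tens (bas [i]) (bas j)) (cmul b)"

definition deltaT :: "('b \<Rightarrow> 'b \<Rightarrow> ('b \<Rightarrow>\<^sub>0 'k::field)) \<Rightarrow> ('b \<Rightarrow>\<^sub>0 'k) \<Rightarrow> ('b \<Rightarrow> ('b \<times> 'b \<Rightarrow>\<^sub>0 'k))
   \<Rightarrow> ('b list \<Rightarrow>\<^sub>0 'k) \<Rightarrow> ('b list \<times> 'b \<Rightarrow>\<^sub>0 'k)" where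
  "deltaT mul one cmul = lin (\<lambda>w. foldr (\<lambda>b acc.
       bmul (tmul (\<lambda>v w. bas (v @ w)) mul) (deltaT_gen cmul b) acc) w (tens (bas []) one))"

subsection \<open>U_H = T(X_H)/I_H, its coinvariants V_H, and mubar(V_H)\<close>

definition I_H :: "('b \<Rightarrow> 'b \<Rightarrow> ('b \<Rightarrow>\<^sub>0 'k::field)) \<Rightarrow> ('b \<Rightarrow>\<^sub>0 'k) \<Rightarrow> ('b \<Rightarrow> ('b \<times> 'b \<Rightarrow>\<^sub>0 'k))
   \<Rightarrow> ('b list \<Rightarrow>\<^sub>0 'k) set" where
  "I_H mul one cmul = {a. mu mul one cmul a = 0}"

text \<open>I_H \<otimes> H as a subspace of T(X_H) \<otimes> H; it is the kernel of
  \<pi> \<otimes> id : T(X_H) \<otimes> H \<rightarrow> U_H \<otimes> H.\<close>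
definition I_H_tensor_H :: "('b \<Rightarrow> 'b \<Rightarrow> ('b \<Rightarrow>\<^sub>0 'k::field)) \<Rightarrow> ('b \<Rightarrow>\<^sub>0 'k) \<Rightarrow> ('b \<Rightarrow> ('b \<times> 'b \<Rightarrow>\<^sub>0 'k))
   \<Rightarrow> ('b list \<times> 'b \<Rightarrow>\<^sub>0 'k) set" where
  "I_H_tensor_H mul one cmul =
     {z. \<exists>(n::nat) f g. (\<forall>j<n. f j \<in> I_H mul one cmul) \<and> z = (\<Sum>j<n. tens (f j) (g j))}"

text \<open>The class [a] \<in> U_H is coinvariant, delta([a]) = [a] \<otimes> 1 in U_H \<otimes> H,
  iff delta_T(a) - a \<otimes> 1 \<in> I_H \<otimes> H.  mubar([a]) = mu(a).  Hence
  mubar(V_H) is the following set.\<close>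
definition mubar_V_H :: "('b \<Rightarrow> 'b \<Rightarrow> ('b \<Rightarrow>\<^sub>0 'k::field)) \<Rightarrow> ('b \<Rightarrow>\<^sub>0 'k) \<Rightarrow> ('b \<Rightarrow> ('b \<times> 'b \<Rightarrow>\<^sub>0 'k))
   \<Rightarrow> (('b \<Rightarrow>\<^sub>0 nat) \<times> 'b \<Rightarrow>\<^sub>0 'k) set" where
  "mubar_V_H mul one cmul =
     {mu mul one cmul a | a. deltaT mul one cmul a - tens a one \<in> I_H_tensor_H mul one cmul}"

definition p_el :: "('b \<Rightarrow> ('b \<times> 'b \<Rightarrow>\<^sub>0 'k::field)) \<Rightarrow> ('b \<Rightarrow> ('b \<Rightarrow>\<^sub>0 'k))
   \<Rightarrow> ('b \<Rightarrow>\<^sub>0 'k) \<Rightarrow> (('b \<Rightarrow>\<^sub>0 nat) \<Rightarrow>\<^sub>0 'k)" where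
  "p_el cmul ant x = lin (\<lambda>(i, j). tH (bas i) * tH (lin ant (bas j))) (lin cmul x)"

definition q_el :: "('b \<Rightarrow> 'b \<Rightarrow> ('b \<Rightarrow>\<^sub>0 'k::field)) \<Rightarrow> ('b \<Rightarrow> ('b \<times> 'b \<Rightarrow>\<^sub>0 'k)) \<Rightarrow> ('b \<Rightarrow> ('b \<Rightarrow>\<^sub>0 'k))
   \<Rightarrow> ('b \<Rightarrow>\<^sub>0 'k) \<Rightarrow> ('b \<Rightarrow>\<^sub>0 'k) \<Rightarrow> (('b \<Rightarrow>\<^sub>0 nat) \<Rightarrow>\<^sub>0 'k)" where
  "q_el mul cmul ant x y =
     lin (\<lambda>(i, j). lin (\<lambda>(k, l).
        tH (bas i) * tH (bas k) * tH (lin ant (bmul mul (bas j) (bas l)))) (lin cmul y)) (lin cmul x)"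

end

theory Submission
  imports Defs
begin

text \<open>Both the coaction \<open>\<delta>\<^sub>T\<close> and \<open>\<mu>\<close> are instances of one algebra map
  \<open>W\<^sub>g : T(X\<^sub>H) \<rightarrow> k[C] \<otimes> H\<close>, \<open>X\<^sub>b \<mapsto> g(b\<^sub>1) \<otimes> b\<^sub>2\<close>, for a monoid \<open>C\<close> and a linear
  \<open>g : H \<rightarrow> k[C]\<close>: take \<open>C\<close> = words and \<open>g(b) = X\<^sub>b\<close>, respectively \<open>C\<close> = monomials and
  \<open>g(b) = t\<^sub>b\<close>. For the element \<open>a\<^sub>x = X\<^bsub>x\<^sub>1\<^esub> X\<^bsub>S(x\<^sub>2)\<^esub>\<close> of \<open>T(X\<^sub>H)\<close> the Hopf algebra identity
  \<open>S(h\<^sub>2)\<^sub>1 \<otimes> h\<^sub>1 S(h\<^sub>2)\<^sub>2 = S(h) \<otimes> 1\<close> gives \<open>W\<^sub>g(a\<^sub>x) = g(x\<^sub>1) g(S(x\<^sub>2)) \<otimes> 1\<close>.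
  Hence \<open>\<delta>\<^sub>T(a\<^sub>x) = a\<^sub>x \<otimes> 1\<close> already in \<open>T(X\<^sub>H)\<close>, so the class of \<open>a\<^sub>x\<close> lies in \<open>\<V>\<^sub>H\<close>, and
  \<open>\<mu>(a\<^sub>x) = p\<^sub>x \<otimes> 1\<close>. The same argument, using multiplicativity of \<open>\<Delta>\<close>, applies to
  \<open>X\<^bsub>x\<^sub>1\<^esub> X\<^bsub>y\<^sub>1\<^esub> X\<^bsub>S(x\<^sub>2y\<^sub>2)\<^esub>\<close> and \<open>q\<^sub>x\<^sub>,\<^sub>y\<close>.\<close>

lemma lookup_smult [simp]: "Poly_Mapping.lookup (smult r v) a = r * Poly_Mapping.lookup v a"
  unfolding smult_def by (simp add: Poly_Mapping.map.rep_eq when_def)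

lemma smult_add_right: "smult r (u + v) = smult r u + smult r v"
  by (rule poly_mapping_eqI) (simp add: lookup_add algebra_simps)

lemma smult_add_left: "smult (r + s) u = smult r u + smult s u"
  by (rule poly_mapping_eqI) (simp add: lookup_add algebra_simps)

lemma smult_smult: "smult r (smult s u) = smult (r * s) u"
  by (rule poly_mapping_eqI) (simp add: algebra_simps)

lemma smult_one [simp]: "smult 1 u = u"
  by (rule poly_mapping_eqI) simp

lemma smult_zero_left [simp]: "smult 0 u = 0"
  by (rule poly_mapping_eqI) simp

lemma smult_sum: "smult r (sum f A) = (\<Sum>a\<in>A. smult r (f a))"
  by (rule poly_mapping_eqI) (simp add: lookup_sum sum_distrib_left)

lemma keys_smult_subset: "Poly_Mapping.keys (smult r v) \<subseteq> Poly_Mapping.keys v"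
  by (auto simp: in_keys_iff)

lemma lin_eq_sum_superset:
  assumes "finite A" "Poly_Mapping.keys v \<subseteq> A"
  shows "lin f v = (\<Sum>a\<in>A. smult (Poly_Mapping.lookup v a) (f a))"
  unfolding lin_def
  by (rule sum.mono_neutral_left) (use assms in \<open>auto simp: in_keys_iff\<close>)

lemma lin_add: "lin f (u + v) = lin f u + lin f v"
proof -
  let ?A = "Poly_Mapping.keys u \<union> Poly_Mapping.keys v"
  have "Poly_Mapping.keys (u + v) \<subseteq> ?A"
    by (simp add: keys_add)
  then show ?thesis
    by (simp add: lin_eq_sum_superset[of ?A] lookup_add smult_add_left sum.distrib)
qed

lemma lin_smult: "lin f (smult r v) = smult r (lin f v)"
  by (simp add: lin_eq_sum_superset[OF _ keys_smult_subset]
      lin_eq_sum_superset[of "Poly_Mapping.keys v"] smult_sum smult_smult)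

lemma lin_bas [simp]: "lin f (bas a) = f a"
  by (simp add: lin_def bas_def)

lemma lin_cong: "(\<And>a. a \<in> Poly_Mapping.keys v \<Longrightarrow> f a = g a) \<Longrightarrow> lin f v = lin g v"
  by (simp add: lin_def)

lemma lin_add_fun: "lin (\<lambda>a. f a + g a) v = lin f v + lin g v"
  by (simp add: lin_def smult_add_right sum.distrib)

lemma lin_smult_fun: "lin (\<lambda>a. smult r (f a)) v = smult r (lin f v)"
  by (simp add: lin_def smult_smult smult_sum mult.commute)

lemma lin_bas_self [simp]: "lin bas v = v"
proof (rule poly_mapping_eqI)
  fix c
  have "Poly_Mapping.lookup (lin bas v) c
      = (\<Sum>a\<in>Poly_Mapping.keys v. if a = c then Poly_Mapping.lookup v a else 0)"
    by (simp add: lin_def lookup_sum bas_def lookup_single when_def eq_commute if_distrib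
        cong: if_cong)
  also have "\<dots> = Poly_Mapping.lookup v c"
    by (simp add: sum.delta in_keys_iff)
  finally show "Poly_Mapping.lookup (lin bas v) c = Poly_Mapping.lookup v c" .
qed

lemma lin_swap: "lin (\<lambda>p. lin (\<lambda>q. g p q) w) v = lin (\<lambda>q. lin (\<lambda>p. g p q) v) w"
proof -
  have "lin (\<lambda>p. lin (\<lambda>q. g p q) w) v = (\<Sum>p\<in>Poly_Mapping.keys v. \<Sum>q\<in>Poly_Mapping.keys w.
      smult (Poly_Mapping.lookup v p * Poly_Mapping.lookup w q) (g p q))"
    unfolding lin_def smult_sum smult_smult ..
  also have "\<dots> = (\<Sum>q\<in>Poly_Mapping.keys w. \<Sum>p\<in>Poly_Mapping.keys v.
      smult (Poly_Mapping.lookup v p * Poly_Mapping.lookup w q) (g p q))"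
    by (rule sum.swap)
  also have "\<dots> = lin (\<lambda>q. lin (\<lambda>p. g p q) v) w"
    unfolding lin_def smult_sum smult_smult by (simp add: mult.commute)
  finally show ?thesis .
qed

definition linear_pm :: "(('a \<Rightarrow>\<^sub>0 'k::field) \<Rightarrow> ('c \<Rightarrow>\<^sub>0 'k)) \<Rightarrow> bool" where
  "linear_pm f \<longleftrightarrow> (\<forall>u v. f (u + v) = f u + f v) \<and> (\<forall>r u. f (smult r u) = smult r (f u))"

lemma linear_pmD:
  "linear_pm f \<Longrightarrow> f (u + v) = f u + f v"
  "linear_pm f \<Longrightarrow> f (smult r u) = smult r (f u)"
  by (auto simp: linear_pm_def)

lemma linear_pm_zero: "linear_pm f \<Longrightarrow> f 0 = 0"
  using linear_pmD(2)[of f 0 0] by simp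

lemma linear_pm_sum: "linear_pm f \<Longrightarrow> f (sum g A) = (\<Sum>a\<in>A. f (g a))"
  by (induction A rule: infinite_finite_induct) (auto simp: linear_pm_zero linear_pmD)

lemma linear_pm_lin: "linear_pm f \<Longrightarrow> f (lin g v) = lin (\<lambda>a. f (g a)) v"
  by (simp add: lin_def linear_pm_sum linear_pmD)

lemma linear_pm_lin_bas: "linear_pm f \<Longrightarrow> lin (\<lambda>a. f (bas a)) v = f v"
  using linear_pm_lin[of f bas v] by simp

lemma linear_pm_ident: "linear_pm (\<lambda>x. x)"
  by (simp add: linear_pm_def)

lemma linear_pm_comp: "linear_pm f \<Longrightarrow> linear_pm g \<Longrightarrow> linear_pm (\<lambda>x. f (g x))"
  by (simp add: linear_pm_def)

lemma linear_pm_lin_self [simp]: "linear_pm (lin f)"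
  by (simp add: linear_pm_def lin_add lin_smult)

lemma linear_pm_lin_fun: "(\<And>a. linear_pm (h a)) \<Longrightarrow> linear_pm (\<lambda>w. lin (\<lambda>a. h a w) v)"
  by (simp add: linear_pm_def lin_add_fun lin_smult_fun)

definition bilinear_pm :: "(('a \<Rightarrow>\<^sub>0 'k::field) \<Rightarrow> ('c \<Rightarrow>\<^sub>0 'k) \<Rightarrow> ('d \<Rightarrow>\<^sub>0 'k)) \<Rightarrow> bool" where
  "bilinear_pm F \<longleftrightarrow> (\<forall>u. linear_pm (F u)) \<and> (\<forall>v. linear_pm (\<lambda>u. F u v))"

lemma bilinear_pmI: "(\<And>u. linear_pm (F u)) \<Longrightarrow> (\<And>v. linear_pm (\<lambda>u. F u v)) \<Longrightarrow> bilinear_pm F"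
  by (simp add: bilinear_pm_def)

lemma bilinear_pmD1: "bilinear_pm F \<Longrightarrow> linear_pm (F u)"
  by (simp add: bilinear_pm_def)

lemma bilinear_pmD2: "bilinear_pm F \<Longrightarrow> linear_pm (\<lambda>u. F u v)"
  by (simp add: bilinear_pm_def)

lemma bilinear_pm_eqI:
  assumes F: "bilinear_pm F" and G: "bilinear_pm G"
    and on_basis: "\<And>a b. F (bas a) (bas b) = G (bas a) (bas b)"
  shows "F u v = G u v"
proof -
  have expand: "B u v = lin (\<lambda>a. lin (\<lambda>b. B (bas a) (bas b)) v) u" if "bilinear_pm B" for B
    using linear_pm_lin_bas[OF bilinear_pmD2[OF that, of v]]
      linear_pm_lin_bas[OF bilinear_pmD1[OF that]] by simp
  show ?thesis
    using expand[OF F] expand[OF G] on_basis by simp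
qed

lemma tens_bas [simp]: "tens (bas a) (bas c) = bas (a, c)"
  by (simp add: tens_def)

lemma bmul_bas [simp]: "bmul m (bas a) (bas c) = m a c"
  by (simp add: bmul_def)

lemma bilinear_pm_bmul: "bilinear_pm (bmul m)"
  unfolding bmul_def by (rule bilinear_pmI) (auto intro: linear_pm_lin_fun)

lemma linear_pm_tens_left: "linear_pm f \<Longrightarrow> linear_pm (\<lambda>x. tens (f x) w)"
  unfolding tens_def by (rule linear_pm_comp) simp_all

lemma linear_pm_tens_right: "linear_pm f \<Longrightarrow> linear_pm (\<lambda>x. tens v (f x))"
  unfolding tens_def by (rule linear_pm_comp[OF linear_pm_lin_fun]) simp_all

lemma linear_pm_bmul_left: "linear_pm f \<Longrightarrow> linear_pm (\<lambda>x. bmul m (f x) w)"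
  by (rule linear_pm_comp[OF bilinear_pmD2[OF bilinear_pm_bmul]])

lemma linear_pm_bmul_right: "linear_pm f \<Longrightarrow> linear_pm (\<lambda>x. bmul m v (f x))"
  by (rule linear_pm_comp[OF bilinear_pmD1[OF bilinear_pm_bmul]])

lemma linear_pm_lin_comp: "linear_pm f \<Longrightarrow> linear_pm (\<lambda>x. lin g (f x))"
  by (rule linear_pm_comp[OF linear_pm_lin_self])

lemmas linear_pm_intros = linear_pm_ident linear_pm_tens_left linear_pm_tens_right
  linear_pm_bmul_left linear_pm_bmul_right linear_pm_lin_comp

definition tens_lift ::
    "(('a \<Rightarrow>\<^sub>0 'k::field) \<Rightarrow> ('c \<Rightarrow>\<^sub>0 'k) \<Rightarrow> ('d \<Rightarrow>\<^sub>0 'k)) \<Rightarrow> ('a \<times> 'c \<Rightarrow>\<^sub>0 'k) \<Rightarrow> ('d \<Rightarrow>\<^sub>0 'k)" where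
  "tens_lift F = lin (\<lambda>(i, j). F (bas i) (bas j))"

lemma linear_pm_tens_lift [simp]: "linear_pm (tens_lift F)"
  by (simp add: tens_lift_def)

lemma tens_lift_bas [simp]: "tens_lift F (bas (a, c)) = F (bas a) (bas c)"
  by (simp add: tens_lift_def)

lemma linear_pm_tens_lift_commute: "linear_pm L \<Longrightarrow> L (tens_lift F z) = tens_lift (\<lambda>a b. L (F a b)) z"
  unfolding tens_lift_def by (simp add: linear_pm_lin case_prod_unfold)

lemma linear_pm_tens_lift_fun:
  "(\<And>i j. linear_pm (\<lambda>x. F x (bas i) (bas j))) \<Longrightarrow> linear_pm (\<lambda>x. tens_lift (F x) z)"
  unfolding tens_lift_def case_prod_unfold by (rule linear_pm_lin_fun)

lemma tens_lift_swap:
  "tens_lift (\<lambda>a b. tens_lift (\<lambda>c d. Z a b c d) w) z = tens_lift (\<lambda>c d. tens_lift (\<lambda>a b. Z a b c d) z) w"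
  unfolding tens_lift_def case_prod_unfold by (rule lin_swap)

lemma tens_lift_tens: "bilinear_pm F \<Longrightarrow> tens_lift F (tens u v) = F u v"
  by (rule bilinear_pm_eqI[of "\<lambda>u v. tens_lift F (tens u v)" F])
    (auto intro!: bilinear_pmI linear_pm_comp[OF linear_pm_tens_lift] linear_pm_intros)

definition sweedler :: "('b \<Rightarrow> ('b \<times> 'b \<Rightarrow>\<^sub>0 'k::field))
    \<Rightarrow> (('b \<Rightarrow>\<^sub>0 'k) \<Rightarrow> ('b \<Rightarrow>\<^sub>0 'k) \<Rightarrow> ('d \<Rightarrow>\<^sub>0 'k)) \<Rightarrow> ('b \<Rightarrow>\<^sub>0 'k) \<Rightarrow> ('d \<Rightarrow>\<^sub>0 'k)" where
  "sweedler cmul F x = tens_lift F (lin cmul x)"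

lemma linear_pm_sweedler [simp]: "linear_pm (sweedler cmul F)"
  unfolding sweedler_def by (intro linear_pm_comp[OF linear_pm_tens_lift] linear_pm_lin_self)

lemma linear_pm_sweedler_commute:
  "linear_pm L \<Longrightarrow> L (sweedler cmul F x) = sweedler cmul (\<lambda>a b. L (F a b)) x"
  unfolding sweedler_def by (rule linear_pm_tens_lift_commute)

lemma linear_pm_sweedler_fun:
  "(\<And>i j. linear_pm (\<lambda>x. F x (bas i) (bas j))) \<Longrightarrow> linear_pm (\<lambda>x. sweedler cmul (F x) z)"
  unfolding sweedler_def by (rule linear_pm_tens_lift_fun)

lemma sweedler_swap:
  "sweedler cmul (\<lambda>a b. sweedler cmul (\<lambda>c d. Z a b c d) w) z
     = sweedler cmul (\<lambda>c d. sweedler cmul (\<lambda>a b. Z a b c d) z) w"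
  unfolding sweedler_def by (rule tens_lift_swap)

locale hopf =
  fixes mul :: "'b \<Rightarrow> 'b \<Rightarrow> ('b \<Rightarrow>\<^sub>0 'k::field)"
    and one :: "'b \<Rightarrow>\<^sub>0 'k"
    and cmul :: "'b \<Rightarrow> ('b \<times> 'b \<Rightarrow>\<^sub>0 'k)"
    and cu :: "'b \<Rightarrow> 'k"
    and ant :: "'b \<Rightarrow> ('b \<Rightarrow>\<^sub>0 'k)"
  assumes hopf_algebra: "hopf_algebra mul one cmul cu ant"
begin

abbreviation m where "m \<equiv> bmul mul"
abbreviation S where "S \<equiv> lin ant"
abbreviation \<epsilon> where "\<epsilon> \<equiv> eps cu"
abbreviation sw where "sw \<equiv> sweedler cmul"

lemma mult_assoc: "m (m x y) z = m x (m y z)"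
  using hopf_algebra by (simp add: hopf_algebra_def)

lemma mult_one_left [simp]: "m one x = x"
  using hopf_algebra by (simp add: hopf_algebra_def)

lemma mult_one_right [simp]: "m x one = x"
  using hopf_algebra by (simp add: hopf_algebra_def)

lemma sweedler_coassoc: "sw (\<lambda>u v. sw (\<lambda>a b. F a b v) u) x = sw (\<lambda>u v. sw (\<lambda>a b. F u a b) v) x"
proof -
  define L where "L = lin (\<lambda>(a, b, c). F (bas a) (bas b) (bas c))"
  have coassoc: "lin (\<lambda>((a, b), c). bas (a, b, c)) (tmap cmul bas (lin cmul x))
      = tmap bas cmul (lin cmul x)"
    using hopf_algebra by (simp add: hopf_algebra_def)
  have "L (lin (\<lambda>((a, b), c). bas (a, b, c)) (tmap cmul bas (lin cmul x)))
      = lin (\<lambda>((a, b), c). F (bas a) (bas b) (bas c)) (tmap cmul bas (lin cmul x))"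
    unfolding L_def by (subst linear_pm_lin) (auto intro: lin_cong)
  also have "\<dots> = sw (\<lambda>u v. sw (\<lambda>a b. F a b v) u) x"
    unfolding tmap_def sweedler_def tens_lift_def tens_def
    by (subst linear_pm_lin) (auto intro!: lin_cong simp: linear_pm_lin case_prod_unfold)
  finally have "L (tmap bas cmul (lin cmul x)) = sw (\<lambda>u v. sw (\<lambda>a b. F a b v) u) x"
    by (simp only: coassoc)
  moreover have "L (tmap bas cmul (lin cmul x)) = sw (\<lambda>u v. sw (\<lambda>a b. F u a b) v) x"
    unfolding L_def tmap_def sweedler_def tens_lift_def tens_def
    by (subst linear_pm_lin) (auto intro!: lin_cong simp: linear_pm_lin case_prod_unfold)
  ultimately show ?thesis by simp
qed

lemma sweedler_counit_left: "linear_pm f \<Longrightarrow> sw (\<lambda>a b. smult (\<epsilon> a) (f b)) x = f x"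
  using hopf_algebra linear_pm_lin[of f "\<lambda>(a, b). smult (cu a) (bas b)" "lin cmul x"]
  by (auto simp: hopf_algebra_def sweedler_def tens_lift_def linear_pmD case_prod_unfold
      eps_def bas_def intro!: lin_cong)

lemma sweedler_counit_right: "linear_pm f \<Longrightarrow> sw (\<lambda>a b. smult (\<epsilon> b) (f a)) x = f x"
  using hopf_algebra linear_pm_lin[of f "\<lambda>(a, b). smult (cu b) (bas a)" "lin cmul x"]
  by (auto simp: hopf_algebra_def sweedler_def tens_lift_def linear_pmD case_prod_unfold
      eps_def bas_def intro!: lin_cong)

lemma sweedler_antipode_left: "sw (\<lambda>a b. m (S a) b) x = smult (\<epsilon> x) one"
  using hopf_algebra by (auto simp: hopf_algebra_def sweedler_def tens_lift_def case_prod_unfold)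

lemma sweedler_antipode_right: "sw (\<lambda>a b. m a (S b)) x = smult (\<epsilon> x) one"
  using hopf_algebra by (auto simp: hopf_algebra_def sweedler_def tens_lift_def case_prod_unfold)

lemma sweedler_one: "bilinear_pm G \<Longrightarrow> sw G one = G one one"
  using hopf_algebra by (simp add: hopf_algebra_def sweedler_def tens_lift_tens)

lemma sweedler_mult:
  assumes G: "bilinear_pm G"
  shows "sw G (m u v) = sw (\<lambda>a b. sw (\<lambda>c d. G (m a c) (m b d)) v) u"
proof -
  have "lin cmul (m u v) = bmul (tmul mul mul) (lin cmul u) (lin cmul v)"
    using hopf_algebra by (simp add: hopf_algebra_def)
  then have "sw G (m u v)
      = lin (\<lambda>p. lin (\<lambda>q. tens_lift G (tmul mul mul p q)) (lin cmul v)) (lin cmul u)"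
    by (simp add: sweedler_def bmul_def linear_pm_lin)
  also have "\<dots> = sw (\<lambda>a b. sw (\<lambda>c d. G (m a c) (m b d)) v) u"
    by (auto simp: sweedler_def tens_lift_def case_prod_unfold tmul_def
        tens_lift_tens[OF G, unfolded tens_lift_def case_prod_unfold] intro!: lin_cong)
  finally show ?thesis .
qed

lemma sweedler_mult_antipode_right:
  assumes K: "bilinear_pm K"
  shows "sw (\<lambda>u v. sw (\<lambda>a b. sw (\<lambda>c d. K (m a c) (m b d)) (S v)) u) h = smult (\<epsilon> h) (K one one)"
proof -
  have "sw (\<lambda>u v. sw (\<lambda>a b. sw (\<lambda>c d. K (m a c) (m b d)) (S v)) u) h = sw (\<lambda>u v. sw K (m u (S v))) h"
    by (simp add: sweedler_mult[OF K])
  also have "\<dots> = sw K (sw (\<lambda>u v. m u (S v)) h)"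
    by (rule linear_pm_sweedler_commute[OF linear_pm_sweedler, symmetric])
  also have "\<dots> = smult (\<epsilon> h) (K one one)"
    by (simp add: sweedler_antipode_right linear_pmD(2)[OF linear_pm_sweedler] sweedler_one[OF K])
  finally show ?thesis .
qed

text \<open>Expanding
  \<open>1 \<otimes> h = S(h\<^sub>1) h\<^sub>2 \<otimes> h\<^sub>3\<close> by the counit and left antipode axioms turns the left-hand side
  into \<open>K(S(h\<^sub>1) h\<^sub>2 S(h\<^sub>4)\<^sub>1, h\<^sub>3 S(h\<^sub>4)\<^sub>2)\<close>, where the middle factors collapse by
  \<open>sweedler_mult_antipode_right\<close>.\<close>

lemma sweedler_antipode_cancel:
  assumes K: "bilinear_pm K"
  shows "sw (\<lambda>a b. sw (\<lambda>c d. K c (m a d)) (S b)) h = K (S h) one"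
proof -
  define \<Lambda> where "\<Lambda> = (\<lambda>z b. sw (\<lambda>a' b'. sw (\<lambda>c d. K (m z c) (m a' d)) (S b')) b)"
  have linear_left: "linear_pm (\<lambda>z. \<Lambda> z b)" for b
    unfolding \<Lambda>_def
    by (intro linear_pm_sweedler_fun linear_pm_comp[OF bilinear_pmD2[OF K]] linear_pm_intros)
  have linear_right: "linear_pm (\<Lambda> z)" for z
    unfolding \<Lambda>_def by simp
  have collapse: "sw (\<lambda>g1 g2. \<Lambda> (m s g1) g2) g = smult (\<epsilon> g) (K s one)" for s g
  proof -
    define Ks where "Ks = (\<lambda>e f. K (m s e) f)"
    have Ks: "bilinear_pm Ks"
      unfolding Ks_def
      by (intro bilinear_pmI linear_pm_comp[OF bilinear_pmD2[OF K]] linear_pm_intros bilinear_pmD1[OF K])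
    have "sw (\<lambda>g1 g2. \<Lambda> (m s g1) g2) g
        = sw (\<lambda>g1 g2. sw (\<lambda>a' b'. sw (\<lambda>c d. Ks (m g1 c) (m a' d)) (S b')) g2) g"
      by (simp add: \<Lambda>_def Ks_def mult_assoc)
    also have "\<dots> = sw (\<lambda>u v. sw (\<lambda>g1 a'. sw (\<lambda>c d. Ks (m g1 c) (m a' d)) (S v)) u) g"
      by (rule sweedler_coassoc[symmetric])
    also have "\<dots> = smult (\<epsilon> g) (K s one)"
      using sweedler_mult_antipode_right[OF Ks] by (simp add: Ks_def)
    finally show ?thesis .
  qed
  have "sw (\<lambda>a b. sw (\<lambda>c d. K c (m a d)) (S b)) h = sw (\<lambda>a b. smult (\<epsilon> a) (\<Lambda> one b)) h"
    using sweedler_counit_left[OF linear_right, of one h] by (simp add: \<Lambda>_def)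
  also have "\<dots> = sw (\<lambda>a b. \<Lambda> (sw (\<lambda>a1 a2. m (S a1) a2) a) b) h"
    by (simp add: linear_pmD(2)[OF linear_left] sweedler_antipode_left)
  also have "\<dots> = sw (\<lambda>a b. sw (\<lambda>a1 a2. \<Lambda> (m (S a) a1) a2) b) h"
    by (simp add: linear_pm_sweedler_commute[OF linear_left] sweedler_coassoc)
  also have "\<dots> = K (S h) one"
    by (simp add: collapse sweedler_counit_right linear_pm_comp[OF bilinear_pmD2[OF K]])
  finally show ?thesis .
qed

lemma sweedler_pair_antipode:
  assumes K: "\<And>a. bilinear_pm (K a)"
  shows "sw (\<lambda>u v. sw (\<lambda>a b. sw (\<lambda>c d. K a c (m b d)) (S v)) u) x = sw (\<lambda>u v. K u (S v) one) x"
  by (simp add: sweedler_coassoc sweedler_antipode_cancel[OF K])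

lemma sweedler_mult_antipode_cancel:
  assumes K: "bilinear_pm K"
  shows "sw (\<lambda>a b. sw (\<lambda>a' b'. sw (\<lambda>c d. K c (m (m a a') d)) (S (m b b'))) v') v
    = K (S (m v v')) one"
proof -
  have "bilinear_pm (\<lambda>h1 h2. sw (\<lambda>c d. K c (m h1 d)) (S h2))"
    by (intro bilinear_pmI linear_pm_sweedler_fun linear_pm_comp[OF bilinear_pmD2[OF K]]
        linear_pm_comp[OF bilinear_pmD1[OF K]] linear_pm_intros linear_pm_comp[OF linear_pm_sweedler])
  from sweedler_mult[OF this, of v v'] show ?thesis
    by (simp add: sweedler_antipode_cancel[OF K])
qed

lemma sweedler_pair_mult_antipode:
  assumes K: "\<And>a'. bilinear_pm (K a')"
  shows "sw (\<lambda>a b. sw (\<lambda>u' v'. sw (\<lambda>a' b'. sw (\<lambda>c d. K a' c (m (m a b') d)) (S (m b v'))) u') y) v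
    = sw (\<lambda>u' v'. K u' (S (m v v')) one) y"
proof -
  have "sw (\<lambda>a b. sw (\<lambda>u' v'. sw (\<lambda>a' b'. sw (\<lambda>c d. K a' c (m (m a b') d)) (S (m b v'))) u') y) v
      = sw (\<lambda>u' v'. sw (\<lambda>a' b'. sw (\<lambda>a b. sw (\<lambda>c d. K a' c (m (m a b') d)) (S (m b v'))) v) u') y"
    by (simp only: sweedler_swap[of cmul _ y] sweedler_swap[of cmul _ _ v])
  also have "\<dots> = sw (\<lambda>u' v'. sw (\<lambda>a' b'. sw (\<lambda>a b. sw (\<lambda>c d. K u' c (m (m a a') d)) (S (m b b'))) v) v') y"
    by (rule sweedler_coassoc)
  also have "\<dots> = sw (\<lambda>u' v'. K u' (S (m v v')) one) y"
    by (simp only: sweedler_swap[of cmul _ v] sweedler_mult_antipode_cancel[OF K])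
  finally show ?thesis .
qed

lemma sweedler_triple_antipode:
  assumes K: "\<And>a a'. bilinear_pm (K a a')"
  shows "sw (\<lambda>u v. sw (\<lambda>u' v'. sw (\<lambda>a b. sw (\<lambda>a' b'.
           sw (\<lambda>c d. K a a' c (m (m b b') d)) (S (m v v'))) u') u) y) x
       = sw (\<lambda>u v. sw (\<lambda>u' v'. K u u' (S (m v v')) one) y) x"
proof -
  have "sw (\<lambda>u v. sw (\<lambda>u' v'. sw (\<lambda>a b. sw (\<lambda>a' b'.
           sw (\<lambda>c d. K a a' c (m (m b b') d)) (S (m v v'))) u') u) y) x
      = sw (\<lambda>u v. sw (\<lambda>a b. sw (\<lambda>u' v'. sw (\<lambda>a' b'.
           sw (\<lambda>c d. K a a' c (m (m b b') d)) (S (m v v'))) u') y) u) x"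
    by (simp only: sweedler_swap[of cmul _ _ y])
  also have "\<dots> = sw (\<lambda>u v. sw (\<lambda>a b. sw (\<lambda>u' v'. sw (\<lambda>a' b'.
           sw (\<lambda>c d. K u a' c (m (m a b') d)) (S (m b v'))) u') y) v) x"
    by (rule sweedler_coassoc)
  also have "\<dots> = sw (\<lambda>u v. sw (\<lambda>u' v'. K u u' (S (m v v')) one) y) x"
    by (simp only: sweedler_pair_mult_antipode[OF K])
  finally show ?thesis .
qed

end

lemma XH_eq: "XH = lin (\<lambda>b. bas [b])"
  by (rule ext) (simp add: XH_def)

lemma linear_pm_XH [simp]: "linear_pm XH"
  by (simp add: XH_eq)

text \<open>The algebra map \<open>T(X\<^sub>H) \<rightarrow> k[C] \<otimes> H\<close>, \<open>X\<^sub>b \<mapsto> g(b\<^sub>1) \<otimes> b\<^sub>2\<close>, where \<open>k[C]\<close> is the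
  algebra of the magma \<open>(C, op)\<close>; only the right unit law of \<open>e\<close> is needed.\<close>

locale word_coaction = hopf mul one cmul cu ant
  for mul :: "'b \<Rightarrow> 'b \<Rightarrow> ('b \<Rightarrow>\<^sub>0 'k::field)"
    and one :: "'b \<Rightarrow>\<^sub>0 'k"
    and cmul :: "'b \<Rightarrow> ('b \<times> 'b \<Rightarrow>\<^sub>0 'k)"
    and cu :: "'b \<Rightarrow> 'k"
    and ant :: "'b \<Rightarrow> ('b \<Rightarrow>\<^sub>0 'k)" +
  fixes op :: "'c \<Rightarrow> 'c \<Rightarrow> 'c" and e :: 'c and g :: "'b \<Rightarrow> ('c \<Rightarrow>\<^sub>0 'k)"
  assumes op_right_neutral: "op v e = v"
begin

abbreviation mmul where "mmul \<equiv> bmul (\<lambda>v w. bas (op v w))"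
abbreviation pmul where "pmul \<equiv> bmul (tmul (\<lambda>v w. bas (op v w)) mul)"
abbreviation gen where "gen b \<equiv> lin (\<lambda>(i, j). tens (g i) (bas j)) (cmul b)"
abbreviation W where "W \<equiv> lin (\<lambda>w. foldr (\<lambda>b acc. pmul (gen b) acc) w (tens (bas e) one))"

lemma pmul_tens: "pmul (tens \<alpha> u) (tens \<beta> v) = tens (mmul \<alpha> \<beta>) (m u v)"
proof (rule bilinear_pm_eqI[of "\<lambda>\<alpha> u. pmul (tens \<alpha> u) (tens \<beta> v)" "\<lambda>\<alpha> u. tens (mmul \<alpha> \<beta>) (m u v)"])
  fix c a
  show "pmul (tens (bas c) (bas a)) (tens \<beta> v) = tens (mmul (bas c) \<beta>) (m (bas a) v)"
    by (rule bilinear_pm_eqI[of "\<lambda>\<beta> v. pmul (tens (bas c) (bas a)) (tens \<beta> v)"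
          "\<lambda>\<beta> v. tens (mmul (bas c) \<beta>) (m (bas a) v)"])
      (auto simp: tmul_def intro!: bilinear_pmI linear_pm_intros)
qed (auto intro!: bilinear_pmI linear_pm_intros)

lemma pmul_unit_right: "pmul z (tens (bas e) one) = z"
proof -
  have on_basis: "pmul (bas p) (tens (bas e) one) = bas p" for p :: "'c \<times> 'b"
    using pmul_tens[of "bas (fst p)" "bas (snd p)" "bas e" one]
    by (simp add: op_right_neutral)
  have "pmul z (tens (bas e) one) = lin (\<lambda>p. pmul (bas p) (tens (bas e) one)) z"
    by (rule linear_pm_lin_bas[OF bilinear_pmD2[OF bilinear_pm_bmul], symmetric])
  then show ?thesis
    by (simp add: on_basis)
qed

lemma W_XH: "W (XH u) = lin gen u"
  by (simp add: XH_eq linear_pm_lin pmul_unit_right)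

lemma W_mult_XH: "W (TH_mul (XH u) z) = pmul (lin gen u) (W z)"
  by (rule bilinear_pm_eqI[of "\<lambda>u z. W (TH_mul (XH u) z)" "\<lambda>u z. pmul (lin gen u) (W z)"])
    (auto simp: TH_mul_def XH_def intro!: bilinear_pmI linear_pm_intros linear_pm_comp[OF linear_pm_XH])

lemma lin_gen_eq_sweedler: "lin gen u = sw (\<lambda>a b. tens (lin g a) b) u"
proof -
  have "sw (\<lambda>a b. tens (lin g a) b) u = lin (\<lambda>b. sw (\<lambda>a b. tens (lin g a) b) (bas b)) u"
    by (rule linear_pm_lin_bas[OF linear_pm_sweedler, symmetric])
  also have "\<dots> = lin gen u"
    by (rule lin_cong) (simp add: sweedler_def tens_lift_def case_prod_unfold)
  finally show ?thesis by simp
qed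

end

context word_coaction
begin

lemma pmul_sweedler_left: "pmul (sw F u) z = sw (\<lambda>a b. pmul (F a b) z) u"
  by (rule linear_pm_sweedler_commute[OF bilinear_pmD2[OF bilinear_pm_bmul]])

lemma pmul_sweedler_right: "pmul z (sw F u) = sw (\<lambda>a b. pmul z (F a b)) u"
  by (rule linear_pm_sweedler_commute[OF bilinear_pmD1[OF bilinear_pm_bmul]])

lemma W_XH_mult_XH:
  "W (TH_mul (XH u) (XH v)) = sw (\<lambda>a b. sw (\<lambda>c d. tens (mmul (lin g a) (lin g c)) (m b d)) v) u"
  unfolding W_mult_XH W_XH lin_gen_eq_sweedler pmul_sweedler_left
  by (simp only: pmul_sweedler_right pmul_tens)

lemma W_XH_mult_XH_mult_XH:
  "W (TH_mul (XH u) (TH_mul (XH u') (XH v)))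
     = sw (\<lambda>a b. sw (\<lambda>a' b'. sw (\<lambda>c d.
         tens (mmul (lin g a) (mmul (lin g a') (lin g c))) (m (m b b') d)) v) u') u"
  unfolding W_mult_XH[of u] W_XH_mult_XH lin_gen_eq_sweedler pmul_sweedler_left
  by (simp only: pmul_sweedler_right pmul_tens mult_assoc[symmetric])

lemma W_p_word:
  "W (sw (\<lambda>u v. TH_mul (XH u) (XH (S v))) x) = tens (sw (\<lambda>u v. mmul (lin g u) (lin g (S v))) x) one"
proof -
  have K: "bilinear_pm (\<lambda>c f. tens (mmul (lin g a) (lin g c)) f)" for a
    by (intro bilinear_pmI linear_pm_intros)
  have "W (sw (\<lambda>u v. TH_mul (XH u) (XH (S v))) x) = sw (\<lambda>u v. tens (mmul (lin g u) (lin g (S v))) one) x"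
    by (simp add: linear_pm_sweedler_commute W_XH_mult_XH sweedler_pair_antipode[OF K])
  also have "\<dots> = tens (sw (\<lambda>u v. mmul (lin g u) (lin g (S v))) x) one"
    by (rule linear_pm_sweedler_commute[OF linear_pm_tens_left[OF linear_pm_ident], symmetric])
  finally show ?thesis .
qed

lemma W_q_word:
  "W (sw (\<lambda>u v. sw (\<lambda>u' v'. TH_mul (XH u) (TH_mul (XH u') (XH (S (m v v'))))) y) x)
     = tens (sw (\<lambda>u v. sw (\<lambda>u' v'. mmul (lin g u) (mmul (lin g u') (lin g (S (m v v'))))) y) x) one"
proof -
  have K: "bilinear_pm (\<lambda>c f. tens (mmul (lin g a) (mmul (lin g a') (lin g c))) f)" for a a'
    by (intro bilinear_pmI linear_pm_intros)
  have "W (sw (\<lambda>u v. sw (\<lambda>u' v'. TH_mul (XH u) (TH_mul (XH u') (XH (S (m v v'))))) y) x)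
      = sw (\<lambda>u v. sw (\<lambda>u' v'. tens (mmul (lin g u) (mmul (lin g u') (lin g (S (m v v'))))) one) y) x"
    by (simp add: linear_pm_sweedler_commute W_XH_mult_XH_mult_XH sweedler_triple_antipode[OF K])
  also have "\<dots> = tens (sw (\<lambda>u v. sw (\<lambda>u' v'. mmul (lin g u) (mmul (lin g u') (lin g (S (m v v'))))) y) x) one"
    by (simp only: linear_pm_sweedler_commute[OF linear_pm_tens_left[OF linear_pm_ident]])
  finally show ?thesis .
qed

end

lemma linear_pm_mult_left: "linear_pm (\<lambda>Q. (P::('b \<Rightarrow>\<^sub>0 nat) \<Rightarrow>\<^sub>0 'k::field) * Q)"
proof -
  have "smult r u = Poly_Mapping.single 0 r * u" for r and u :: "('b \<Rightarrow>\<^sub>0 nat) \<Rightarrow>\<^sub>0 'k"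
    unfolding smult_def by (rule mult_map_scale_conv_mult)
  then show ?thesis
    by (simp add: linear_pm_def distrib_left ac_simps)
qed

lemma bmul_monomial_eq_times: "bmul (\<lambda>v w. bas (v + w)) P Q = (P::('b \<Rightarrow>\<^sub>0 nat) \<Rightarrow>\<^sub>0 'k::field) * Q"
proof (rule bilinear_pm_eqI[of "bmul (\<lambda>v w. bas (v + w))" "\<lambda>P Q. P * Q"])
  show "bilinear_pm (bmul (\<lambda>v w. bas (v + w)))"
    by (rule bilinear_pm_bmul)
  show "bilinear_pm (\<lambda>P Q::('b \<Rightarrow>\<^sub>0 nat) \<Rightarrow>\<^sub>0 'k. P * Q)"
    using linear_pm_mult_left by (intro bilinear_pmI) (simp_all add: mult.commute[of _ "_::('b \<Rightarrow>\<^sub>0 nat) \<Rightarrow>\<^sub>0 'k"])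
qed (subst bmul_bas, simp add: bas_def mult_single)

lemma coinvariant_mu_mem_mubar_V_H:
  assumes "deltaT mul one cmul a = tens a one"
  shows "mu mul one cmul a \<in> mubar_V_H mul one cmul"
proof -
  have "0 \<in> I_H_tensor_H mul one cmul"
    unfolding I_H_tensor_H_def by (rule CollectI, rule exI[of _ 0]) simp
  with assms show ?thesis
    unfolding mubar_V_H_def by auto
qed

theorem lemma5p1:
  fixes mul :: "'b \<Rightarrow> 'b \<Rightarrow> ('b \<Rightarrow>\<^sub>0 'k::field)"
    and one :: "'b \<Rightarrow>\<^sub>0 'k"
    and cmul :: "'b \<Rightarrow> ('b \<times> 'b \<Rightarrow>\<^sub>0 'k)"
    and cu :: "'b \<Rightarrow> 'k"
    and ant :: "'b \<Rightarrow> ('b \<Rightarrow>\<^sub>0 'k)"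
    and x y :: "'b \<Rightarrow>\<^sub>0 'k"
  assumes "hopf_algebra mul one cmul cu ant"
  shows "tens (p_el cmul ant x) one \<in> mubar_V_H mul one cmul \<and>
         tens (q_el mul cmul ant x y) one \<in> mubar_V_H mul one cmul"
proof -
  interpret T: word_coaction mul one cmul cu ant "(@)" "[]" "\<lambda>i. bas [i]"
    by (intro word_coaction.intro hopf.intro word_coaction_axioms.intro assms) simp
  interpret M: word_coaction mul one cmul cu ant "(+)" 0 tvar
    by (intro word_coaction.intro hopf.intro word_coaction_axioms.intro assms) simp
  have deltaT: "deltaT mul one cmul = T.W"
    by (simp add: deltaT_def deltaT_gen_def)
  have mu: "mu mul one cmul = M.W"
    by (simp add: mu_def SH_mul_def SH_one_def mu_gen_def bas_def)
  define a\<^sub>p where "a\<^sub>p = sweedler cmul (\<lambda>u v. TH_mul (XH u) (XH (lin ant v))) x"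
  define a\<^sub>q where "a\<^sub>q = sweedler cmul (\<lambda>u v. sweedler cmul (\<lambda>u' v'.
    TH_mul (XH u) (TH_mul (XH u') (XH (lin ant (bmul mul v v'))))) y) x"
  have "deltaT mul one cmul a\<^sub>p = tens a\<^sub>p one" "deltaT mul one cmul a\<^sub>q = tens a\<^sub>q one"
    unfolding deltaT a\<^sub>p_def a\<^sub>q_def T.W_p_word T.W_q_word by (simp_all add: XH_eq TH_mul_def)
  moreover have "mu mul one cmul a\<^sub>p = tens (p_el cmul ant x) one"
    "mu mul one cmul a\<^sub>q = tens (q_el mul cmul ant x y) one"
    unfolding mu a\<^sub>p_def a\<^sub>q_def M.W_p_word M.W_q_word
    by (simp_all add: tH_def[abs_def, symmetric] bmul_monomial_eq_times p_el_def q_el_def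
        sweedler_def tens_lift_def mult.assoc)
  ultimately show ?thesis
    by (metis coinvariant_mu_mem_mubar_V_H)
qed

end
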